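(* For every integer $n>7$, $F_n\ge 3$.
   Context: Define maps $G,S:\mathbb Z^2\to\mathbb Z^2$ by $G(x,y)=(x+y,y)$ and $S(x,y)=(3x-2y+1,\,2x-y+1)$. Define the array $(F_{n,k})_{n,k\ge 0}$ by $F_{0,0}=1$ and, for $(n,k)\neq(0,0)$, $F_{n,k}$ is the number of finite words $w=w_1w_2\cdots w_m$ ($m\ge 0$) over the alphabet $\{G,S\}$ with $w_1\circ w_2\circ\cdots\circ w_m(1,1)=(n,k)$ (the empty word acts as the identity). Equivalently: start with all entries $0$, set $F_{0,0}=1$ and $F_{1,1}=1$, and thereafter, whenever an entry $F_{n,k}$ with $n\ge 1$ changes its value, increase $F_{n+k,k}$ and $F_{3n+1-2k,\,2n+1-k}$ by $1$. Set $F_n=\sum_{k\ge0}F_{n,k}$ (a finite sum since $F_{n,k}=0$ for $k>n$). *)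

theory Defs
  imports Main
begin

datatype letter = LG | LS

fun mapG :: "int \<times> int \<Rightarrow> int \<times> int" where
  "mapG (x, y) = (x + y, y)"

fun mapS :: "int \<times> int \<Rightarrow> int \<times> int" where
  "mapS (x, y) = (3 * x - 2 * y + 1, 2 * x - y + 1)"

fun act :: "letter \<Rightarrow> int \<times> int \<Rightarrow> int \<times> int" where
  "act LG = mapG"
| "act LS = mapS"

definition word_eval :: "letter list \<Rightarrow> int \<times> int" where
  "word_eval w = foldr act w (1, 1)"

definition Fnk :: "nat \<Rightarrow> nat \<Rightarrow> nat" where
  "Fnk n k = (if n = 0 \<and> k = 0 then 1
              else card {w. word_eval w = (int n, int k)})"

definition Fn :: "nat \<Rightarrow> nat" where
  "Fn n = (\<Sum>k\<le>n. Fnk n k)"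

end

theory Submission
  imports Defs
begin

text \<open>In the coordinates \<open>p = 2(x - y) + 1\<close>, \<open>q = y\<close> the maps become
  \<open>G: (p, q) \<mapsto> (p + 2q, q)\<close> and \<open>S: (p, q) \<mapsto> (p, q + p)\<close>, starting at \<open>(1, 1)\<close>,
  and \<open>F(n, k) > 0\<close> as soon as \<open>(2n + 1 - 2k, k)\<close> is reachable. The values \<open>k = 1\<close> and
  \<open>k = n\<close> are always reachable, so a third \<open>1 < k < n\<close> is needed. If \<open>n + 1\<close> has an
  odd divisor \<open>v = 2r + 1 \<ge> 3\<close>, the point \<open>(v, n - r)\<close> is reachable. Otherwise
  \<open>n = 2\<^sup>a - 1\<close>: running Euclid's algorithm on the exponents shows that
  \<open>(2\<^sup>t - 1, 2\<^sup>u - 1)\<close> is reachable whenever \<open>gcd t u = 1\<close>, which gives \<open>k = 2\<^sup>j - 1\<close>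
  for any \<open>2 \<le> j < a\<close> coprime to \<open>a + 1\<close>. Such \<open>j\<close> exists unless \<open>a = 5\<close>, and
  \<open>n = 31\<close> is settled by \<open>k = 10\<close>.\<close>

inductive reach :: "int \<Rightarrow> int \<Rightarrow> bool" where
  reach_init: "reach 1 1"
| reach_G: "reach p q \<Longrightarrow> reach (p + 2 * q) q"
| reach_S: "reach p q \<Longrightarrow> reach p (q + p)"

lemma reach_G_power: "reach p q \<Longrightarrow> reach (p + 2 * q * int m) q"
proof (induction m)
  case (Suc m)
  then show ?case using reach_G[of "p + 2 * q * int m" q] by (simp add: algebra_simps)
qed simp

lemma reach_S_power: "reach p q \<Longrightarrow> reach p (q + p * int m)"
proof (induction m)
  case (Suc m)
  then show ?case using reach_S[of p "q + p * int m"] by (simp add: algebra_simps)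
qed simp

lemma reach_one_left: "0 < q \<Longrightarrow> reach 1 q"
  using reach_S_power[OF reach_init, of "nat (q - 1)"] by simp

lemma reach_one_right: "reach (2 * int m + 1) 1"
  using reach_G_power[OF reach_init, of m] by (simp add: algebra_simps)

lemma reach_mersenne:
  fixes t u :: nat
  assumes "coprime t u" "1 \<le> t" "1 \<le> u"
  shows "reach (2 ^ t - 1) (2 ^ u - 1)"
  using assms
proof (induction "t + u" arbitrary: t u rule: less_induct)
  case less
  consider (eq) "t = u" | (gt) "u < t" | (lt) "t < u" by linarith
  then show ?case
  proof cases
    case eq
    then have "t = 1" "u = 1" using less.prems by simp_all
    then show ?thesis by (simp add: reach_init)
  next
    case gt
    define d where "d = t - u"
    have "coprime d u"
      using less.prems gt by (simp add: d_def coprime_iff_gcd_eq_1 gcd_diff1_nat)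
    then have "reach (2 ^ d - 1) (2 ^ u - 1)"
      using less gt by (intro less.hyps) (auto simp: d_def)
    moreover obtain e where "d = Suc e" using gt by (auto simp: d_def intro: that[of "t - u - 1"])
    moreover have "t = d + u" using gt d_def by simp
    \<comment> \<open>\<open>2^t - 1 = (2^d - 1) + 2 (2^u - 1) 2^e\<close>\<close>
    ultimately show ?thesis
      using reach_G_power[of "2 ^ d - 1" "2 ^ u - 1" "2 ^ e"] by (simp add: power_add algebra_simps)
  next
    case lt
    define d where "d = u - t"
    have "coprime t d"
      using less.prems lt gcd_diff1_nat[of t u]
      by (simp add: d_def coprime_iff_gcd_eq_1 gcd.commute)
    then have "reach (2 ^ t - 1) (2 ^ d - 1)"
      using less lt by (intro less.hyps) (auto simp: d_def)
    moreover have "u = d + t" using lt d_def by simp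
    ultimately show ?thesis
      using reach_S_power[of "2 ^ t - 1" "2 ^ d - 1" "2 ^ d"] by (simp add: power_add algebra_simps)
  qed
qed

lemma word_eval_Cons: "word_eval (l # w) = act l (word_eval w)"
  by (simp add: word_eval_def)

lemma reach_imp_word_eval: "reach p q \<Longrightarrow> \<exists>w x. word_eval w = (x, q) \<and> p = 2 * (x - q) + 1"
proof (induction rule: reach.induct)
  case reach_init
  have "word_eval [] = (1, 1)" by (simp add: word_eval_def)
  then show ?case by auto
next
  case (reach_G p q)
  then obtain w x where "word_eval w = (x, q)" "p = 2 * (x - q) + 1" by blast
  then have "word_eval (LG # w) = (x + q, q) \<and> p + 2 * q = 2 * (x + q - q) + 1"
    by (simp add: word_eval_Cons)
  then show ?case by blast
next
  case (reach_S p q)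
  then obtain w x where "word_eval w = (x, q)" "p = 2 * (x - q) + 1" by blast
  then have "word_eval (LS # w) = (3 * x - 2 * q + 1, q + p)
      \<and> p = 2 * (3 * x - 2 * q + 1 - (q + p)) + 1"
    by (simp add: word_eval_Cons)
  then show ?case by blast
qed

lemma word_eval_bounds: "word_eval w = (x, y) \<Longrightarrow> 1 \<le> y \<and> y \<le> x \<and> int (length w) < x"
proof (induction w arbitrary: x y)
  case Nil
  then show ?case by (simp add: word_eval_def)
next
  case (Cons l w)
  obtain x0 y0 where "word_eval w = (x0, y0)" by fastforce
  with Cons show ?case by (cases l) (auto simp: word_eval_Cons)
qed

lemma finite_UNIV_letter: "finite (UNIV :: letter set)"
proof -
  have "(UNIV :: letter set) = {LG, LS}" using letter.exhaust by auto
  then show ?thesis by (metis finite.emptyI finite_insert)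
qed

lemma finite_word_eval_fiber: "finite {w. word_eval w = z}"
proof (rule finite_subset)
  show "{w. word_eval w = z} \<subseteq> {w. set w \<subseteq> UNIV \<and> length w \<le> nat (fst z)}"
    by (cases z) (fastforce dest: word_eval_bounds)
qed (rule finite_lists_length_le[OF finite_UNIV_letter])

lemma Fnk_pos_if_reach:
  assumes "reach (2 * int n + 1 - 2 * int k) (int k)"
  shows "0 < Fnk n k"
proof -
  obtain w x where w: "word_eval w = (x, int k)" "2 * int n + 1 - 2 * int k = 2 * (x - int k) + 1"
    using reach_imp_word_eval[OF assms] by blast
  then have w_n: "word_eval w = (int n, int k)" by simp
  then have "0 < n" using word_eval_bounds by fastforce
  with w_n show ?thesis
    using finite_word_eval_fiber[of "(int n, int k)"] by (auto simp: Fnk_def card_gt_0_iff)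
qed

lemma Fn_ge_3_if_reach:
  assumes "1 < k" "k < n" "reach (2 * int n + 1 - 2 * int k) (int k)"
  shows "3 \<le> Fn n"
proof -
  have "0 < Fnk n 1"
    using reach_one_right[of "n - 1"] assms by (intro Fnk_pos_if_reach) (simp add: of_nat_diff)
  moreover have "0 < Fnk n n"
    using reach_one_left[of "int n"] assms by (intro Fnk_pos_if_reach) simp
  moreover have "0 < Fnk n k" using assms by (intro Fnk_pos_if_reach)
  ultimately have "3 \<le> sum (Fnk n) {1, k, n}" using assms by simp
  also have "\<dots> \<le> Fn n" unfolding Fn_def using assms by (intro sum_mono2) auto
  finally show ?thesis .
qed

lemma Fn_ge_3_if_odd_divisor:
  assumes "odd v" "3 \<le> v" "v dvd n + 1" "2 < n"
  shows "3 \<le> Fn n"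
proof -
  obtain r where r: "v = 2 * r + 1" using \<open>odd v\<close> by (rule oddE)
  obtain t where t: "n + 1 = v * t" using \<open>v dvd n + 1\<close> by (rule dvdE)
  then obtain s where s: "t = Suc s" using r by (cases t) auto
  have "reach (1 + 2 * int r) (int r)" using reach_one_left[of "int r"] r assms reach_G by force
  from reach_S_power[OF this, of s]
  have "reach (2 * int n + 1 - 2 * int (r + v * s)) (int (r + v * s))"
    using r s t by (simp add: algebra_simps)
  moreover have "1 < r + v * s" "r + v * s < n" using r s t assms by (auto simp: algebra_simps)
  ultimately show ?thesis by (intro Fn_ge_3_if_reach)
qed

lemma exists_coprime_le_minus_2:
  fixes N :: nat
  assumes "5 \<le> N" "N \<noteq> 6"
  obtains j where "2 \<le> j" "j + 2 \<le> N" "coprime N j"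
proof (cases "odd N")
  case True
  then show ?thesis using assms by (intro that[of 2]) auto
next
  case False
  then obtain m where m: "N = 2 * m" by blast
  show ?thesis
  proof (cases "even m")
    case True
    moreover have "coprime m (m - 1)" using m assms by (intro coprime_diff_one_right_nat) simp
    ultimately show ?thesis using m assms by (intro that[of "m - 1"]) auto
  next
    case False
    define j where "j = m - 2"
    have "5 \<le> m" using m assms False by presburger
    then have j: "m = j + 2" "odd j" using False by (simp_all add: j_def)
    then have "coprime m j"
      using gcd_add1[of 2 j] by (simp only: coprime_iff_gcd_eq_1 add.commute) simp
    then have "coprime N j" using m j coprime_mult_left_iff coprime_left_2_iff_odd by metis
    then show ?thesis using \<open>5 \<le> m\<close> m j by (intro that[of j]) auto
  qed
qed

lemma Fn_ge_3_mersenne: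
  assumes "4 \<le> a" "a \<noteq> 5"
  shows "3 \<le> Fn (2 ^ a - 1)"
proof -
  obtain j where j: "2 \<le> j" "j + 2 \<le> a + 1" "coprime (a + 1) j"
    using exists_coprime_le_minus_2[of "a + 1"] assms by auto
  define e where "e = a - j"
  have "coprime (Suc e) j"
    using j gcd_diff1_nat[of j "a + 1"] by (simp add: e_def coprime_iff_gcd_eq_1 Suc_diff_le)
  then have "reach (2 ^ Suc e - 1) (2 ^ j - 1)" using j by (intro reach_mersenne) auto
  \<comment> \<open>\<open>2^(a+1) - 2^(j+1) + 1 = (2^(e+1) - 1) + 2 (2^j - 1) (2^e - 1)\<close>\<close>
  from reach_G_power[OF this, of "2 ^ e - 1"]
  have "reach (2 ^ (a + 1) - 2 ^ (j + 1) + 1) (2 ^ j - 1)"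
    using j by (simp add: e_def of_nat_diff power_add[symmetric] algebra_simps)
  moreover have "4 \<le> (2::nat) ^ j" "(2::nat) ^ j < 2 ^ a"
    using j power_increasing[of 2 j "2::nat"] by auto
  then have "1 < (2::nat) ^ j - 1" "(2::nat) ^ j - 1 < 2 ^ a - 1" by linarith+
  ultimately show ?thesis
    by (intro Fn_ge_3_if_reach[of "2 ^ j - 1"]) (simp_all add: of_nat_diff algebra_simps)
qed

lemma Fn_31: "3 \<le> Fn 31"
proof -
  have "reach 3 1" using reach_one_right[of 1] by simp
  from reach_G_power[OF reach_S_power[OF this, of 3], of 2]
  have "reach 43 10" by simp
  then show ?thesis by (intro Fn_ge_3_if_reach[of 10]) simp_all
qed

lemma exists_power_two_times_odd:
  fixes m :: nat
  assumes "0 < m"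
  shows "\<exists>a v. m = 2 ^ a * v \<and> odd v"
  using assms
proof (induction m rule: less_induct)
  case (less m)
  show ?case
  proof (cases "even m")
    case True
    then obtain m' where m': "m = 2 * m'" by blast
    with less.prems have "m' < m" "0 < m'" by simp_all
    with less.IH obtain a v where "m' = 2 ^ a * v" "odd v" by blast
    with m' have "m = 2 ^ Suc a * v \<and> odd v" by simp
    then show ?thesis by blast
  next
    case False
    then have "m = 2 ^ 0 * m \<and> odd m" by simp
    then show ?thesis by blast
  qed
qed

theorem theorem12:
  fixes n :: nat
  assumes "n > 7"
  shows "Fn n \<ge> 3"
proof -
  obtain a v where nv: "n + 1 = 2 ^ a * v" "odd v"
    using exists_power_two_times_odd[of "n + 1"] by auto
  show ?thesis
  proof (cases "v = 1")
    case True
    then have n: "n = 2 ^ a - 1" using nv by simp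
    have "4 \<le> a"
    proof (rule ccontr)
      assume "\<not> 4 \<le> a"
      then have "(2::nat) ^ a \<le> 2 ^ 3" by (intro power_increasing) auto
      then show False using n assms by simp
    qed
    then show ?thesis using n Fn_31 Fn_ge_3_mersenne by (cases "a = 5") auto
  next
    case False
    with \<open>odd v\<close> have "3 \<le> v" by presburger
    then show ?thesis using nv assms by (intro Fn_ge_3_if_odd_divisor[of v]) auto
  qed
qed

end
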